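(* Consider the combined heat and power network described in the context, operating in Mode 2. Then, at equilibrium, the power contributions $p^G=(p^G_j)_{j\in N_e^G}$ of the electric generators and $h^G=(h^G_j)_{j\in E_h^G}$ of the conventional heat sources (together with $p^U=(D_j\omega_j)_{j\in N_e}$) are a solution of the combined heat and power optimization problem $$\min_{p^G,h^G,p^U}\ \tfrac12(p^G)^TQ_ep^G+\tfrac12(h^G)^T\tfrac{m}{C_o}Q_hh^G+\tfrac12(p^U)^TQ_up^U$$ subject to $$\mathbf 1^Tp^G=\mathbf 1^Tp^L+\mathbf 1^Tp^P+\mathbf 1^Tp^U,\qquad \mathbf 1^Th^G=\mathbf 1^Th^L-\mathbf 1^Th^P,\qquad h^P_{j_k}=C_op^P_{i_k},\ k\in H,$$ where $Q_e=\mathrm{diag}(Q_{e,jj})$, $Q_h=\mathrm{diag}(Q_{h,jj})$, $Q_u=\mathrm{diag}(1/D_j)_{j\in N_e}$.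
   Context: Power network: a directed graph $(N_e,E_e)$ with buses $N_e$ and lines $E_e$, arbitrarily oriented. $N_e^G\subseteq N_e$ is the set of generator buses and $H_e\subseteq N_e$ the set of (heat-pump converter) buses to which heat pumps are connected. Heat network: a directed graph $(N_h,E_h)$, each edge $j$ oriented along its mass flow with inlet node $s(j)$ and outlet node $t(j)$; among the edges are heat-pump edges $H_h$, conventional heat source edges $E_h^G$ and heat-load edges $E_h^L$. Heat pumps are indexed by a finite set $H$; heat pump $k\in H$ is connected to bus $i_k\in H_e$ and corresponds to edge $j_k\in H_h$. Lines: for $(i,j)\in E_e$, $\dot\eta_{ij}=\omega_i-\omega_j$, $p_{ij}=B_{ij}\sin(\eta_{ij})-p^{\mathrm{nom}}_{ij}$, $B_{ij}>0$. Buses $j\in N_e\setminus H_e$: $M_j\dot\omega_j=-p^L_j+p^G_j-p^U_j+\sum_{i:(i,j)\in E_e}p_{ij}-\sum_{k:(j,k)\in E_e}p_{jk}$, with $M_j>0$, $p^U_j=D_j\omega_j$, $D_j>0$, $p^L_j$ constant (step load change), $p^G_j=0$ for $j\notin N_e^G$. Heat-pump buses $j\in H_e$ (Mode 2): zero inertia, $0=-p^P_j+\sum_{i:(i,j)\in E_e}p_{ij}-\sum_{k:(j,k)\in E_e}p_{jk}$ and $\omega_j=m\bar T$, where $p^P_j$ is the heat pump electric power and $m$ a scalar constant. Heat network ($\rho C_p=1$), constant positive mass flows $q^E_j$, volumes $V^E_j,V^N_k>0$: $V^E_j\dot T^E_j=q^E_j(T^N_{s(j)}-T^E_j)+h^G_j+h^P_j-h^L_j$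 for each edge $j$, $V^N_k\dot T^N_k=\sum_{j:t(j)=k}q^E_j(T^E_j-T^N_k)$ for each node $k$, where $h^G_j=0$ unless $j\in E_h^G$, $h^P_j=0$ unless $j\in H_h$, $h^L_j=0$ unless $j\in E_h^L$, $h^L_j$ constant. In matrix form $V\dot T=-A_hT+\mathrm{col}(h^G+h^P-h^L,\mathbf 0)$ with $T=\mathrm{col}(T^E,T^N)$, $V=\mathrm{diag}(V^E,V^N)$, where $A_h\mathbf 1=0$, $\mathbf 1^TA_h=0$ and $A_h+A_h^T$ is positive semidefinite with a simple zero eigenvalue. Average temperature $\bar T=\mathbf 1^TVT/(\mathbf 1^TV\mathbf 1)$. Generation control: $\dot p^G_j=-p^G_j-\frac{1}{Q_{e,jj}}\omega_j$ ($j\in N_e^G$), $\dot h^G_j=-h^G_j-\frac{1}{Q_{h,jj}}\bar T$ ($j\in E_h^G$), with $Q_{e,jj},Q_{h,jj}>0$. Heat pump: $h^P_{j_k}=C_op^P_{i_k}$, $k\in H$, with constant coefficient of performance $C_o$. *)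

theory Defs
  imports Complex_Main
begin

definition avg_temp ::
  "'e set \<Rightarrow> 'n set \<Rightarrow> ('e \<Rightarrow> real) \<Rightarrow> ('n \<Rightarrow> real) \<Rightarrow> ('e \<Rightarrow> real) \<Rightarrow> ('n \<Rightarrow> real) \<Rightarrow> real" where
  "avg_temp Eh Nh VE VN TE TN =
     ((\<Sum>j\<in>Eh. VE j * TE j) + (\<Sum>k\<in>Nh. VN k * TN k)) / ((\<Sum>j\<in>Eh. VE j) + (\<Sum>k\<in>Nh. VN k))"

definition line_flow :: "('b \<times> 'b \<Rightarrow> real) \<Rightarrow> ('b \<times> 'b \<Rightarrow> real) \<Rightarrow> ('b \<times> 'b \<Rightarrow> real) \<Rightarrow> 'b \<times> 'b \<Rightarrow> real" where
  "line_flow B pnom eta e = B e * sin (eta e) - pnom e"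

definition net_inflow :: "('b \<times> 'b) set \<Rightarrow> ('b \<times> 'b \<Rightarrow> real) \<Rightarrow> 'b \<Rightarrow> real" where
  "net_inflow Ee p j = (\<Sum>e\<in>{e\<in>Ee. snd e = j}. p e) - (\<Sum>e\<in>{e\<in>Ee. fst e = j}. p e)"

definition chp_cost ::
  "'b set \<Rightarrow> 'e set \<Rightarrow> 'b set \<Rightarrow> ('b \<Rightarrow> real) \<Rightarrow> ('e \<Rightarrow> real) \<Rightarrow> ('b \<Rightarrow> real) \<Rightarrow> real \<Rightarrow> real
   \<Rightarrow> ('b \<Rightarrow> real) \<Rightarrow> ('e \<Rightarrow> real) \<Rightarrow> ('b \<Rightarrow> real) \<Rightarrow> real" where
  "chp_cost NeG EhG NeU Qe Qh D m Co pG hG pU =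
     (1/2) * (\<Sum>j\<in>NeG. Qe j * (pG j)\<^sup>2)
   + (1/2) * (\<Sum>j\<in>EhG. (m / Co) * Qh j * (hG j)\<^sup>2)
   + (1/2) * (\<Sum>j\<in>NeU. (1 / D j) * (pU j)\<^sup>2)"

definition chp_feasible ::
  "'b set \<Rightarrow> 'e set \<Rightarrow> 'b set \<Rightarrow> 'e set \<Rightarrow> 'k set \<Rightarrow> ('k \<Rightarrow> 'b) \<Rightarrow> ('k \<Rightarrow> 'e) \<Rightarrow> real
   \<Rightarrow> ('b \<Rightarrow> real) \<Rightarrow> ('e \<Rightarrow> real)
   \<Rightarrow> ('b \<Rightarrow> real) \<Rightarrow> ('e \<Rightarrow> real) \<Rightarrow> ('b \<Rightarrow> real) \<Rightarrow> ('b \<Rightarrow> real) \<Rightarrow> ('e \<Rightarrow> real) \<Rightarrow> bool" where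
  "chp_feasible NeG EhG NeU EhL H ib je Co pL hL pG hG pU pP hP \<longleftrightarrow>
     (\<Sum>j\<in>NeG. pG j) = (\<Sum>j\<in>NeU. pL j) + (\<Sum>j\<in>ib ` H. pP j) + (\<Sum>j\<in>NeU. pU j)
   \<and> (\<Sum>j\<in>EhG. hG j) = (\<Sum>j\<in>EhL. hL j) - (\<Sum>j\<in>je ` H. hP j)
   \<and> (\<forall>k\<in>H. hP (je k) = Co * pP (ib k))"

end

theory Submission
  imports Defs
begin

text \<open>At equilibrium the frequency is a common value w on the connected power network,
  and summing the bus and edge equations (line flows and advective heat flows cancel in
  the sum) gives both balance constraints. The cost is a sum of convex quadratics whose
  gradient at the equilibrium is -w on every generator, w on every damping term and
  -(m/C_o) Tbar on every heat source, so by the first-order convexity bound any feasible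
  competitor costs at least the equilibrium cost plus (m Tbar - w) times the change of
  the total heat-pump power. This term vanishes: either there are no heat pumps, or
  the heat-pump buses pin w = m Tbar.\<close>

lemma eq_on_rtrancl_symcl:
  assumes "\<forall>(a, b)\<in>E. f a = f b" and "(a, b) \<in> (E \<union> converse E)\<^sup>*"
  shows "f a = f b"
  using assms(2)
proof (induction rule: rtrancl_induct)
  case (step y z)
  with assms(1) show ?case by auto
qed simp

lemma connected_imp_const:
  assumes "\<forall>a\<in>N. \<forall>b\<in>N. (a, b) \<in> (E \<union> converse E)\<^sup>*" and "\<forall>(a, b)\<in>E. f a = f b"
  obtains w where "\<forall>j\<in>N. f j = w"
proof (cases "N = {}")
  case False
  then obtain a where "a \<in> N" by auto
  with assms eq_on_rtrancl_symcl[of E f] show ?thesis by (metis that)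
qed (use that in auto)

lemma sum_net_inflow_eq_0:
  fixes p :: "'b \<times> 'b \<Rightarrow> real"
  assumes "finite N" and "E \<subseteq> N \<times> N"
  shows "(\<Sum>j\<in>N. net_inflow E p j) = 0"
proof -
  have "finite E" using assms finite_subset by blast
  moreover have "snd ` E \<subseteq> N" "fst ` E \<subseteq> N" using assms(2) by auto
  ultimately have "(\<Sum>j\<in>N. \<Sum>e\<in>{e\<in>E. snd e = j}. p e) = sum p E"
    and "(\<Sum>j\<in>N. \<Sum>e\<in>{e\<in>E. fst e = j}. p e) = sum p E"
    using sum.group[OF _ assms(1), of E _ p] by auto
  then show ?thesis unfolding net_inflow_def sum_subtractf by simp
qed

lemma equilibrium_power_balance:
  fixes pL pG pU pP :: "'b \<Rightarrow> real"
  assumes "finite Ne" and "E \<subseteq> Ne \<times> Ne" and "NeG \<subseteq> Ne - He" and "He \<subseteq> Ne"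
    and bus: "\<forall>j\<in>Ne - He. 0 = - pL j + (if j \<in> NeG then pG j else 0) - pU j + net_inflow E p j"
    and hp_bus: "\<forall>j\<in>He. 0 = - pP j + net_inflow E p j"
  shows "sum pG NeG = sum pL (Ne - He) + sum pP He + sum pU (Ne - He)"
proof -
  have "sum (\<lambda>j. net_inflow E p j) (Ne - He) + sum (\<lambda>j. net_inflow E p j) He = 0"
    using sum_net_inflow_eq_0[OF assms(1,2), of p]
      sum.subset_diff[OF assms(4,1), of "net_inflow E p"] by simp
  moreover have "(\<Sum>j\<in>Ne - He. if j \<in> NeG then pG j else 0) = sum pG NeG"
    using assms(1,3) by (simp add: sum.inter_restrict[symmetric] Int_absorb1)
  moreover have "(\<Sum>j\<in>Ne - He. - pL j + (if j \<in> NeG then pG j else 0) - pU j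
                   + net_inflow E p j) = 0"
    and "(\<Sum>j\<in>He. - pP j + net_inflow E p j) = 0"
    using bus hp_bus by simp_all
  ultimately show ?thesis by (simp add: sum.distrib sum_subtractf sum_negf)
qed

lemma sum_advection_eq_0:
  fixes q TE :: "'e \<Rightarrow> real" and TN :: "'n \<Rightarrow> real"
  assumes "finite E" and "finite N" and "\<forall>j\<in>E. s j \<in> N \<and> t j \<in> N"
    and mass_cons: "\<forall>k\<in>N. (\<Sum>j\<in>{j\<in>E. t j = k}. q j) = (\<Sum>j\<in>{j\<in>E. s j = k}. q j)"
    and node_balance: "\<forall>k\<in>N. 0 = (\<Sum>j\<in>{j\<in>E. t j = k}. q j * (TE j - TN k))"
  shows "(\<Sum>j\<in>E. q j * (TN (s j) - TE j)) = 0"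
proof -
  have "t ` E \<subseteq> N" "s ` E \<subseteq> N" using assms(3) by auto
  note group = sum.group[OF assms(1,2) this(1)] sum.group[OF assms(1,2) this(2)]
  have "(\<Sum>j\<in>E. q j * TE j) = (\<Sum>k\<in>N. \<Sum>j\<in>{j\<in>E. t j = k}. q j * TE j)"
    using group(1)[of "\<lambda>j. q j * TE j"] by simp
  also have "\<dots> = (\<Sum>k\<in>N. TN k * (\<Sum>j\<in>{j\<in>E. t j = k}. q j))"
  proof (rule sum.cong[OF refl])
    fix k assume "k \<in> N"
    then have "(\<Sum>j\<in>{j\<in>E. t j = k}. q j * (TE j - TN k)) = 0"
      using node_balance by simp
    then show "(\<Sum>j\<in>{j\<in>E. t j = k}. q j * TE j) = TN k * (\<Sum>j\<in>{j\<in>E. t j = k}. q j)"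
      by (simp add: right_diff_distrib sum_subtractf sum_distrib_left mult.commute)
  qed
  also have "\<dots> = (\<Sum>k\<in>N. \<Sum>j\<in>{j\<in>E. s j = k}. q j * TN (s j))"
    using mass_cons by (intro sum.cong) (simp_all add: sum_distrib_left mult.commute)
  also have "\<dots> = (\<Sum>j\<in>E. q j * TN (s j))"
    using group(2)[of "\<lambda>j. q j * TN (s j)"] by simp
  finally show ?thesis by (simp add: right_diff_distrib sum_subtractf)
qed

lemma equilibrium_heat_balance:
  fixes a hG hP hL :: "'e \<Rightarrow> real"
  assumes "finite Eh" and "EhG \<subseteq> Eh" and "EhL \<subseteq> Eh" and "Hh \<subseteq> Eh"
    and "\<forall>j\<in>Eh - EhG. hG j = 0" and "\<forall>j\<in>Eh - Hh. hP j = 0" and "\<forall>j\<in>Eh - EhL. hL j = 0"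
    and advection: "sum a Eh = 0" and edge: "\<forall>j\<in>Eh. 0 = a j + hG j + hP j - hL j"
  shows "sum hG EhG = sum hL EhL - sum hP Hh"
proof -
  have "sum hG Eh = sum hG EhG" "sum hP Eh = sum hP Hh" "sum hL Eh = sum hL EhL"
    using assms(1-7) by (simp_all add: sum.mono_neutral_right)
  moreover have "(\<Sum>j\<in>Eh. a j + hG j + hP j - hL j) = 0"
    using edge by simp
  ultimately show ?thesis
    using advection by (simp add: sum.distrib sum_subtractf)
qed

lemma sum_heat_pump_conversion:
  fixes hP :: "'e \<Rightarrow> real" and pP :: "'b \<Rightarrow> real"
  assumes "inj_on ib H" and "inj_on je H" and "\<forall>k\<in>H. hP (je k) = Co * pP (ib k)"
  shows "sum hP (je ` H) = Co * sum pP (ib ` H)"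
  using assms by (simp add: sum.reindex sum_distrib_left)

lemma weighted_squares_tangent_bound:
  fixes a x y :: "'a \<Rightarrow> real"
  assumes "\<forall>j\<in>A. a j \<ge> 0" and "\<forall>j\<in>A. a j * x j = c"
  shows "1/2 * (\<Sum>j\<in>A. a j * (x j)\<^sup>2) + c * (sum y A - sum x A)
           \<le> 1/2 * (\<Sum>j\<in>A. a j * (y j)\<^sup>2)"
proof -
  have "a j * (x j)\<^sup>2 / 2 + c * (y j - x j) \<le> a j * (y j)\<^sup>2 / 2" if "j \<in> A" for j
  proof -
    have "0 \<le> a j * (y j - x j)\<^sup>2" using assms(1) that by simp
    then show ?thesis using assms(2) that by (auto simp: power2_eq_square algebra_simps)
  qed
  then have "(\<Sum>j\<in>A. a j * (x j)\<^sup>2 / 2 + c * (y j - x j)) \<le> (\<Sum>j\<in>A. a j * (y j)\<^sup>2 / 2)"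
    by (rule sum_mono)
  then show ?thesis
    by (simp add: sum.distrib sum_subtractf sum_divide_distrib[symmetric] sum_distrib_left[symmetric])
qed

text \<open>A heat pump turns one unit of electric power into C_o units of heat, so
  mu_e = C_o mu_h makes routing power through the heat pumps cost-neutral to first order.\<close>

lemma chp_cost_minimal_if_marginal_costs_match:
  assumes feas: "chp_feasible NeG EhG NeU EhL H ib je Co pL hL pG hG pU pP hP"
    and feas': "chp_feasible NeG EhG NeU EhL H ib je Co pL hL pG' hG' pU' pP' hP'"
    and inj: "inj_on ib H" "inj_on je H"
    and Qe_nonneg: "\<forall>j\<in>NeG. Qe j \<ge> 0"
    and Qh_nonneg: "\<forall>j\<in>EhG. m / Co * Qh j \<ge> 0"
    and D_nonneg: "\<forall>j\<in>NeU. 1 / D j \<ge> 0"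
    and marginal_pG: "\<forall>j\<in>NeG. Qe j * pG j = \<mu>\<^sub>e"
    and marginal_hG: "\<forall>j\<in>EhG. m / Co * Qh j * hG j = \<mu>\<^sub>h"
    and marginal_pU: "\<forall>j\<in>NeU. 1 / D j * pU j = - \<mu>\<^sub>e"
    and prices_match: "H \<noteq> {} \<Longrightarrow> \<mu>\<^sub>e = Co * \<mu>\<^sub>h"
  shows "chp_cost NeG EhG NeU Qe Qh D m Co pG hG pU \<le> chp_cost NeG EhG NeU Qe Qh D m Co pG' hG' pU'"
proof -
  define dP where "dP = sum pP' (ib ` H) - sum pP (ib ` H)"
  have "sum hP (je ` H) = Co * sum pP (ib ` H)" "sum hP' (je ` H) = Co * sum pP' (ib ` H)"
    using feas feas' unfolding chp_feasible_def
    by (auto intro: sum_heat_pump_conversion[OF inj])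
  with feas feas' have dG: "sum pG' NeG - sum pG NeG = dP + (sum pU' NeU - sum pU NeU)"
    and dH: "sum hG' EhG - sum hG EhG = - Co * dP"
    unfolding chp_feasible_def dP_def by (auto simp: right_diff_distrib)
  have "(\<mu>\<^sub>e - Co * \<mu>\<^sub>h) * dP = 0"
    using prices_match by (cases "H = {}") (simp_all add: dP_def)
  then have "\<mu>\<^sub>e * (sum pG' NeG - sum pG NeG) + \<mu>\<^sub>h * (sum hG' EhG - sum hG EhG)
               - \<mu>\<^sub>e * (sum pU' NeU - sum pU NeU) = 0"
    unfolding dG dH by (simp add: algebra_simps)
  moreover have "1/2 * (\<Sum>j\<in>NeG. Qe j * (pG j)\<^sup>2) + \<mu>\<^sub>e * (sum pG' NeG - sum pG NeG)
                   \<le> 1/2 * (\<Sum>j\<in>NeG. Qe j * (pG' j)\<^sup>2)"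
    using Qe_nonneg marginal_pG by (rule weighted_squares_tangent_bound)
  moreover have "1/2 * (\<Sum>j\<in>EhG. m / Co * Qh j * (hG j)\<^sup>2) + \<mu>\<^sub>h * (sum hG' EhG - sum hG EhG)
                   \<le> 1/2 * (\<Sum>j\<in>EhG. m / Co * Qh j * (hG' j)\<^sup>2)"
    using Qh_nonneg marginal_hG by (rule weighted_squares_tangent_bound)
  moreover have "1/2 * (\<Sum>j\<in>NeU. 1 / D j * (pU j)\<^sup>2) + - \<mu>\<^sub>e * (sum pU' NeU - sum pU NeU)
                   \<le> 1/2 * (\<Sum>j\<in>NeU. 1 / D j * (pU' j)\<^sup>2)"
    using D_nonneg marginal_pU by (rule weighted_squares_tangent_bound)
  ultimately show ?thesis unfolding chp_cost_def by linarith
qed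

theorem theorem2:
  fixes Ne NeG :: "'b set" and Ee :: "('b \<times> 'b) set"
    and Nh :: "'n set" and Eh EhG EhL :: "'e set" and s t :: "'e \<Rightarrow> 'n"
    and H :: "'k set" and ib :: "'k \<Rightarrow> 'b" and je :: "'k \<Rightarrow> 'e"
    and B pnom eta :: "'b \<times> 'b \<Rightarrow> real"
    and D Qe pL :: "'b \<Rightarrow> real" and Qh hL q VE :: "'e \<Rightarrow> real" and VN :: "'n \<Rightarrow> real"
    and m Co :: real
    and omega pG pP :: "'b \<Rightarrow> real" and hG hP TE :: "'e \<Rightarrow> real" and TN :: "'n \<Rightarrow> real"
  defines "He \<equiv> ib ` H" and "Hh \<equiv> je ` H"
    and "Tbar \<equiv> avg_temp Eh Nh VE VN TE TN"
    and "p \<equiv> line_flow B pnom eta"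
  assumes \<comment> \<open>power network structure\<close>
    finNe: "finite Ne" and Ee_sub: "Ee \<subseteq> Ne \<times> Ne"
    and conn: "\<forall>a\<in>Ne. \<forall>b\<in>Ne. (a, b) \<in> (Ee \<union> converse Ee)\<^sup>*"
    and NeG_sub: "NeG \<subseteq> Ne - He"
    and He_sub: "He \<subseteq> Ne"
    and B_pos: "\<forall>e\<in>Ee. B e > 0"
    and D_pos: "\<forall>j\<in>Ne - He. D j > 0"
    and Qe_pos: "\<forall>j\<in>NeG. Qe j > 0"
    \<comment> \<open>heat network structure\<close>
    and finNh: "finite Nh" and finEh: "finite Eh"
    and st: "\<forall>j\<in>Eh. s j \<in> Nh \<and> t j \<in> Nh"
    and EhG_sub: "EhG \<subseteq> Eh" and EhL_sub: "EhL \<subseteq> Eh" and Hh_sub: "Hh \<subseteq> Eh"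
    and q_pos: "\<forall>j\<in>Eh. q j > 0"
    and mass_cons: "\<forall>k\<in>Nh. (\<Sum>j\<in>{j\<in>Eh. t j = k}. q j) = (\<Sum>j\<in>{j\<in>Eh. s j = k}. q j)"
    and VE_pos: "\<forall>j\<in>Eh. VE j > 0" and VN_pos: "\<forall>k\<in>Nh. VN k > 0"
    and Qh_pos: "\<forall>j\<in>EhG. Qh j > 0"
    \<comment> \<open>heat pumps\<close>
    and finH: "finite H" and inj_ib: "inj_on ib H" and inj_je: "inj_on je H"
    and m_Co: "m / Co > 0"
    \<comment> \<open>zero conventions\<close>
    and hG_zero: "\<forall>j\<in>Eh - EhG. hG j = 0"
    and hP_zero: "\<forall>j\<in>Eh - Hh. hP j = 0"
    and hL_zero: "\<forall>j\<in>Eh - EhL. hL j = 0"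
    \<comment> \<open>equilibrium of the Mode 2 dynamics\<close>
    and eq_line: "\<forall>(i, j)\<in>Ee. omega i - omega j = 0"
    and eq_bus: "\<forall>j\<in>Ne - He. 0 = - pL j + (if j \<in> NeG then pG j else 0) - D j * omega j
                                   + net_inflow Ee p j"
    and eq_hp_bus: "\<forall>j\<in>He. 0 = - pP j + net_inflow Ee p j"
    and eq_hp_freq: "\<forall>j\<in>He. omega j = m * Tbar"
    and eq_edge: "\<forall>j\<in>Eh. 0 = q j * (TN (s j) - TE j) + hG j + hP j - hL j"
    and eq_node: "\<forall>k\<in>Nh. 0 = (\<Sum>j\<in>{j\<in>Eh. t j = k}. q j * (TE j - TN k))"
    and eq_pG: "\<forall>j\<in>NeG. 0 = - pG j - omega j / Qe j"
    and eq_hG: "\<forall>j\<in>EhG. 0 = - hG j - Tbar / Qh j"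
    and eq_hp: "\<forall>k\<in>H. hP (je k) = Co * pP (ib k)"
  shows "chp_feasible NeG EhG (Ne - He) EhL H ib je Co pL hL pG hG (\<lambda>j. D j * omega j) pP hP
       \<and> (\<forall>pG' hG' pU' pP' hP'.
            chp_feasible NeG EhG (Ne - He) EhL H ib je Co pL hL pG' hG' pU' pP' hP' \<longrightarrow>
            chp_cost NeG EhG (Ne - He) Qe Qh D m Co pG hG (\<lambda>j. D j * omega j)
              \<le> chp_cost NeG EhG (Ne - He) Qe Qh D m Co pG' hG' pU')"
proof -
  obtain w where w: "\<forall>j\<in>Ne. omega j = w"
    using connected_imp_const[OF conn, of omega] eq_line by auto
  have "sum pG NeG = sum pL (Ne - He) + sum pP He + (\<Sum>j\<in>Ne - He. D j * omega j)"
    using equilibrium_power_balance[OF finNe Ee_sub NeG_sub He_sub eq_bus eq_hp_bus] .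
  moreover have "sum hG EhG = sum hL EhL - sum hP Hh"
    using equilibrium_heat_balance[OF finEh EhG_sub EhL_sub Hh_sub hG_zero hP_zero hL_zero
        sum_advection_eq_0[OF finEh finNh st mass_cons eq_node]] eq_edge
    by simp
  ultimately have feas:
    "chp_feasible NeG EhG (Ne - He) EhL H ib je Co pL hL pG hG (\<lambda>j. D j * omega j) pP hP"
    unfolding chp_feasible_def He_def Hh_def using eq_hp by simp
  have Co: "Co \<noteq> 0" using m_Co by auto
  have prices_match: "- w = Co * (- (m / Co * Tbar))" if "H \<noteq> {}"
  proof -
    obtain k where "k \<in> H" using \<open>H \<noteq> {}\<close> by blast
    then have "ib k \<in> He" "ib k \<in> Ne" using He_sub unfolding He_def by auto
    then have "w = m * Tbar" using w eq_hp_freq by metis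
    then show ?thesis using Co by simp
  qed
  have "\<forall>j\<in>NeG. Qe j * pG j = - w"
  proof
    fix j assume "j \<in> NeG"
    then have "Qe j > 0" "pG j = - (omega j / Qe j)" "omega j = w"
      using Qe_pos eq_pG w NeG_sub by auto
    then show "Qe j * pG j = - w" by simp
  qed
  moreover have "\<forall>j\<in>EhG. m / Co * Qh j * hG j = - (m / Co * Tbar)"
  proof
    fix j assume "j \<in> EhG"
    then have "Qh j > 0" "hG j = - (Tbar / Qh j)" using Qh_pos eq_hG by auto
    then show "m / Co * Qh j * hG j = - (m / Co * Tbar)" by simp
  qed
  moreover have "\<forall>j\<in>Ne - He. 1 / D j * (D j * omega j) = - (- w)"
    using D_pos w by force
  moreover have "\<forall>j\<in>EhG. m / Co * Qh j \<ge> 0"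
    using Qh_pos m_Co by (auto intro!: mult_nonneg_nonneg simp del: times_divide_eq_left)
  moreover have "\<forall>j\<in>NeG. Qe j \<ge> 0" "\<forall>j\<in>Ne - He. 1 / D j \<ge> 0"
    using Qe_pos D_pos by (simp_all add: less_imp_le)
  ultimately show ?thesis
    using feas chp_cost_minimal_if_marginal_costs_match[OF feas _ inj_ib inj_je] prices_match
    by blast
qed

end
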